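(* Let $\Lambda\subset\mathbb{D}$ be a separated Blaschke sequence. Then there exist a partition $\Lambda=\Lambda_1\,\dot\cup\,\Lambda_2$ and constants $c,\eta>0$ such that for $k=1,2$ and all $\lambda\in\Lambda$, $$\log\frac{1}{|(B_k)_\lambda(\lambda)|}\ge c\log\frac{1}{|B_\lambda(\lambda)|}-\eta,$$ where $B_k=\prod_{\mu\in\Lambda_k}b_\mu$, and $(B_k)_\lambda=\prod_{\mu\in\Lambda_k\setminus\{\lambda\}}b_\mu$ if $\lambda\in\Lambda_k$, $(B_k)_\lambda=B_k$ otherwise.
   Context: For $\lambda\in\mathbb{D}$, $b_\lambda(z)=\frac{|\lambda|}{\lambda}\frac{\lambda-z}{1-\bar\lambda z}$ (with $b_0(z)=z$). For a Blaschke sequence $\Lambda$ (i.e. $\sum_{\lambda\in\Lambda}(1-|\lambda|^2)<\infty$), $B_\lambda=\prod_{\mu\in\Lambda\setminus\{\lambda\}}b_\mu$. $\Lambda$ is separated if $\inf_{\lambda\ne\mu,\ \lambda,\mu\in\Lambda}|b_\lambda(\mu)|>0$. *)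

theory Defs
  imports "HOL-Analysis.Analysis"
begin

definition blaschke_factor :: "complex \<Rightarrow> complex \<Rightarrow> complex" where
  "blaschke_factor l z =
     (if l = 0 then z
      else (complex_of_real (cmod l) / l) * ((l - z) / (1 - cnj l * z)))"

definition blaschke_seq :: "complex set \<Rightarrow> bool" where
  "blaschke_seq L \<longleftrightarrow> L \<subseteq> ball 0 1 \<and> (\<lambda>l. 1 - (cmod l)\<^sup>2) summable_on L"

definition separated :: "complex set \<Rightarrow> bool" where
  "separated L \<longleftrightarrow> (\<exists>\<delta>>0. \<forall>l\<in>L. \<forall>m\<in>L. l \<noteq> m \<longrightarrow> \<delta> \<le> cmod (blaschke_factor l m))"

definition blaschke_prod :: "complex set \<Rightarrow> complex \<Rightarrow> complex" where
  "blaschke_prod L z = Lim (finite_subsets_at_top L) (\<lambda>F. \<Prod>m\<in>F. blaschke_factor m z)"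

end

theory Submission
  imports Defs
begin

text \<open>
  Write \<open>W(l, m) = 1 - |b\<^sub>m(l)|\<^sup>2\<close>. For a separated sequence, \<open>-ln |b\<^sub>m(l)|\<close> is comparable to
  \<open>W(l, m)\<close>, so it suffices to split the sequence so that each half keeps a fixed fraction of
  every sum of \<open>W(l, m)\<close> over \<open>m \<noteq> l\<close>, up to an additive constant.
  Group the points into the dyadic annuli \<open>2 ^ -(j+1) < 1 - |m| \<le> 2 ^ -j\<close>, which are finite,
  sort each annulus by argument and assign its points alternately to the two halves.
  Within an annulus, \<open>W(l, m)\<close> is comparable to its value at the radial projection of \<open>m\<close> onto
  the circle \<open>|z| = 1 - 2 ^ -j\<close>, and there it is a function of the argument with at most four
  monotone pieces. Hence the alternating sum over the annulus is at most four times the maximum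
  \<open>M\<^sub>j\<close> of \<open>W(l, -)\<close> on that circle, and \<open>\<Sum>\<^sub>j M\<^sub>j\<close> is bounded independently of \<open>l\<close> by a
  telescoping estimate.
\<close>

section \<open>Blaschke factors\<close>

definition blaschke_weight :: "complex \<Rightarrow> complex \<Rightarrow> real" where
  "blaschke_weight l m = (1 - (cmod l)\<^sup>2) * (1 - (cmod m)\<^sup>2) / (cmod (1 - cnj l * m))\<^sup>2"

lemma cmod_one_minus_cnj_mult_commute: "cmod (1 - cnj m * l) = cmod (1 - cnj l * m)"
proof -
  have "cnj (1 - cnj m * l) = 1 - cnj l * m" by (simp add: mult.commute)
  then show ?thesis by (metis complex_mod_cnj)
qed

lemma cmod_one_minus_cnj_mult_ge:
  assumes "cmod l < 1" "cmod m < 1"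
  shows "1 - cmod l \<le> cmod (1 - cnj m * l)" "1 - cmod m \<le> cmod (1 - cnj m * l)"
proof -
  have "1 - cmod m * cmod l \<le> cmod (1 - cnj m * l)"
    by (metis norm_one norm_triangle_ineq2 norm_mult complex_mod_cnj)
  moreover have "cmod m * cmod l \<le> cmod l" "cmod m * cmod l \<le> cmod m"
    using assms by (simp_all add: mult_left_le_one_le mult_right_le_one_le)
  ultimately show "1 - cmod l \<le> cmod (1 - cnj m * l)" "1 - cmod m \<le> cmod (1 - cnj m * l)"
    by linarith+
qed

lemma cmod_one_minus_cnj_mult_pos: "cmod l < 1 \<Longrightarrow> cmod m < 1 \<Longrightarrow> 0 < cmod (1 - cnj m * l)"
  using cmod_one_minus_cnj_mult_ge(1)[of l m] by linarith

lemma norm_blaschke_factor: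
  "cmod (blaschke_factor m l) = cmod (m - l) / cmod (1 - cnj m * l)"
proof (cases "m = 0")
  case False
  then have "cmod (complex_of_real (cmod m) / m) = 1" by (simp add: norm_divide)
  with False show ?thesis by (simp add: blaschke_factor_def norm_mult norm_divide)
qed (simp add: blaschke_factor_def norm_minus_commute)

lemma blaschke_factor_nonzero:
  "cmod l < 1 \<Longrightarrow> cmod m < 1 \<Longrightarrow> m \<noteq> l \<Longrightarrow> blaschke_factor m l \<noteq> 0"
  using norm_blaschke_factor[of m l] cmod_one_minus_cnj_mult_pos[of l m] by auto

lemma norm_blaschke_factor_commute: "cmod (blaschke_factor m l) = cmod (blaschke_factor l m)"
  by (simp add: norm_blaschke_factor norm_minus_commute cmod_one_minus_cnj_mult_commute)

lemma norm_blaschke_factor_sq: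
  assumes "cmod l < 1" "cmod m < 1"
  shows "(cmod (blaschke_factor m l))\<^sup>2 = 1 - blaschke_weight l m"
proof -
  have pos: "0 < cmod (1 - cnj m * l)" using cmod_one_minus_cnj_mult_pos[OF assms] .
  have "(cmod (1 - cnj m * l))\<^sup>2 - (cmod (m - l))\<^sup>2 = (1 - (cmod l)\<^sup>2) * (1 - (cmod m)\<^sup>2)"
    unfolding cmod_power2 by (cases m; cases l) (simp add: power2_eq_square algebra_simps)
  with pos have "(cmod (m - l) / cmod (1 - cnj m * l))\<^sup>2
      = 1 - (1 - (cmod l)\<^sup>2) * (1 - (cmod m)\<^sup>2) / (cmod (1 - cnj m * l))\<^sup>2"
    by (simp add: power_divide field_simps)
  then show ?thesis
    by (simp add: norm_blaschke_factor blaschke_weight_def cmod_one_minus_cnj_mult_commute[of m l])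
qed

lemma blaschke_weight_nonneg: "cmod l < 1 \<Longrightarrow> cmod m < 1 \<Longrightarrow> 0 \<le> blaschke_weight l m"
  unfolding blaschke_weight_def by (simp add: abs_square_le_1 less_imp_le)

lemma blaschke_weight_le_one: "cmod l < 1 \<Longrightarrow> cmod m < 1 \<Longrightarrow> blaschke_weight l m \<le> 1"
  using norm_blaschke_factor_sq[of l m] by (metis diff_ge_0_iff_ge zero_le_power2)

lemma norm_one_minus_blaschke_factor_le:
  assumes "cmod z < 1" "cmod m < 1"
  shows "cmod (1 - blaschke_factor m z) \<le> (1 - cmod m) * (1 + cmod z) / (1 - cmod z)"
proof (cases "m = 0")
  case True
  have "cmod (1 - z) \<le> 1 + cmod z" by (metis norm_one norm_triangle_ineq4)
  also have "\<dots> \<le> (1 + cmod z) / (1 - cmod z)"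
    using assms by (simp add: le_divide_eq) (intro mult_left_le, auto)
  finally show ?thesis using True by (simp add: blaschke_factor_def)
next
  case False
  have den: "1 - cmod z \<le> cmod (1 - cnj m * z)" "1 - cnj m * z \<noteq> 0"
    using cmod_one_minus_cnj_mult_ge[OF assms] cmod_one_minus_cnj_mult_pos[OF assms] by auto
  have "m * (1 - cnj m * z) - cmod m * (m - z) = m - (m * cnj m) * z - cmod m * (m - z)"
    by (simp add: algebra_simps)
  also have "\<dots> = of_real (1 - cmod m) * (m + cmod m * z)"
    by (simp only: complex_norm_square[symmetric]) (simp add: algebra_simps power2_eq_square)
  finally have "m * (1 - cnj m * z) - cmod m * (m - z) = of_real (1 - cmod m) * (m + cmod m * z)" .
  moreover have "1 - blaschke_factor m z
      = (m * (1 - cnj m * z) - cmod m * (m - z)) / (m * (1 - cnj m * z))"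
    using False den(2) by (simp add: blaschke_factor_def field_simps)
  ultimately have eq:
      "1 - blaschke_factor m z = of_real (1 - cmod m) * (m + cmod m * z) / (m * (1 - cnj m * z))"
    by simp
  have num: "cmod (m + cmod m * z) \<le> cmod m * (1 + cmod z)"
    using norm_triangle_ineq[of m "cmod m * z"] by (simp add: norm_mult algebra_simps)
  have "cmod (1 - blaschke_factor m z)
      = (1 - cmod m) * cmod (m + cmod m * z) / (cmod m * cmod (1 - cnj m * z))"
    unfolding eq norm_divide norm_mult norm_of_real using assms by simp
  also have "\<dots> \<le> (1 - cmod m) * (cmod m * (1 + cmod z)) / (cmod m * (1 - cmod z))"
    using assms False num den by (intro frac_le mult_left_mono) auto
  also have "\<dots> = (1 - cmod m) * (1 + cmod z) / (1 - cmod z)" using False by simp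
  finally show ?thesis .
qed

section \<open>Logarithms of Blaschke products\<close>

lemma finite_summable_on_ge:
  fixes g :: "'a \<Rightarrow> real"
  assumes "g summable_on A" "\<And>x. x \<in> A \<Longrightarrow> 0 \<le> g x" "0 < \<epsilon>"
  shows "finite {x\<in>A. \<epsilon> \<le> g x}"
proof (rule ccontr)
  assume "infinite {x\<in>A. \<epsilon> \<le> g x}"
  obtain n :: nat where n: "infsum g A < n * \<epsilon>"
    using reals_Archimedean3[OF assms(3)] by blast
  obtain B where B: "finite B" "card B = n" "B \<subseteq> {x\<in>A. \<epsilon> \<le> g x}"
    using infinite_arbitrarily_large[OF \<open>infinite _\<close>] by blast
  have "n * \<epsilon> = (\<Sum>x\<in>B. \<epsilon>)" using B by simp
  also have "\<dots> \<le> sum g B" using B by (intro sum_mono) auto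
  also have "\<dots> \<le> infsum g A" using B assms by (intro finite_sum_le_infsum) auto
  finally show False using n by simp
qed

lemma norm_Ln_le:
  assumes "cmod (1 - b) \<le> 1/2"
  shows "cmod (Ln b) \<le> 2 * cmod (1 - b)"
proof -
  define z where "z = b - 1"
  have z: "cmod z \<le> 1/2" using assms by (simp add: z_def norm_minus_commute)
  have "cmod (Ln (1 + z) - z) \<le> (cmod z)\<^sup>2 / (1 - cmod z)"
    using z by (intro Ln_approx_linear) auto
  also have "\<dots> \<le> cmod z"
    using z by (simp add: field_simps power2_eq_square) (intro mult_left_le, auto)
  finally have "cmod (Ln (1 + z)) \<le> 2 * cmod z"
    using norm_triangle_sub[of "Ln (1 + z)" z] by simp
  then show ?thesis by (simp add: z_def norm_minus_commute)
qed

lemma summable_on_Ln_blaschke_factor: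
  assumes A: "A \<subseteq> ball 0 1" "(\<lambda>m. 1 - (cmod m)\<^sup>2) summable_on A" and l: "cmod l < 1"
  shows "(\<lambda>m. Ln (blaschke_factor m l)) summable_on A"
proof -
  define C where "C = (1 + cmod l) / (1 - cmod l)"
  have C: "0 < C" using l by (simp add: C_def add_pos_nonneg)
  have Am: "cmod m < 1" if "m \<in> A" for m using A that by auto
  have near_one: "cmod (1 - blaschke_factor m l) \<le> C * (1 - (cmod m)\<^sup>2)" if "m \<in> A" for m
  proof -
    have "cmod (1 - blaschke_factor m l) \<le> (1 - cmod m) * C"
      using norm_one_minus_blaschke_factor_le[OF l Am[OF that]] by (simp add: C_def)
    also have "\<dots> \<le> (1 - (cmod m)\<^sup>2) * C"
      using C Am[OF that] by (intro mult_right_mono) (auto simp: power2_eq_square mult_left_le_one_le)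
    finally show ?thesis by (simp add: mult.commute)
  qed
  \<comment> \<open>Outside the finite set \<open>E\<close> the factors are within \<open>1/2\<close> of \<open>1\<close>,
    where \<open>Ln\<close> is linearly bounded.\<close>
  define E where "E = {m\<in>A. 1 / (2 * C) \<le> 1 - (cmod m)\<^sup>2}"
  have "finite E" unfolding E_def
    using C Am by (intro finite_summable_on_ge[OF A(2)]) (auto simp: abs_square_le_1 less_imp_le)
  have small: "cmod (Ln (blaschke_factor m l)) \<le> 2 * C * (1 - (cmod m)\<^sup>2)" if "m \<in> A - E" for m
  proof -
    have "1 - (cmod m)\<^sup>2 < 1 / (2 * C)" using that by (auto simp: E_def)
    then have "C * (1 - (cmod m)\<^sup>2) < 1/2" using C by (simp add: field_simps)
    then have "cmod (1 - blaschke_factor m l) \<le> 1/2" using near_one[of m] that by auto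
    then have "cmod (Ln (blaschke_factor m l)) \<le> 2 * cmod (1 - blaschke_factor m l)"
      by (rule norm_Ln_le)
    with near_one[of m] that show ?thesis by auto
  qed
  have "(\<lambda>m. 2 * C * (1 - (cmod m)\<^sup>2)) summable_on (A - E)"
    by (intro summable_on_cmult_right summable_on_subset[OF A(2)]) auto
  then have "(\<lambda>m. cmod (Ln (blaschke_factor m l))) summable_on (A - E)"
    using small by (rule Infinite_Sum.abs_summable_on_comparison_test')
  then have "(\<lambda>m. Ln (blaschke_factor m l)) summable_on (A - E)"
    by (rule abs_summable_summable)
  moreover have "(\<lambda>m. Ln (blaschke_factor m l)) summable_on (A \<inter> E)"
    using \<open>finite E\<close> by (intro summable_on_finite) simp
  ultimately have "(\<lambda>m. Ln (blaschke_factor m l)) summable_on ((A - E) \<union> (A \<inter> E))"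
    by (rule summable_on_Un_disjoint) blast
  moreover have "(A - E) \<union> (A \<inter> E) = A" by blast
  ultimately show ?thesis by simp
qed

lemma blaschke_prod_eq_exp_infsum:
  assumes "A \<subseteq> ball 0 1" "(\<lambda>m. 1 - (cmod m)\<^sup>2) summable_on A" "cmod l < 1" "l \<notin> A"
  shows "blaschke_prod A l = exp (\<Sum>\<^sub>\<infinity>m\<in>A. Ln (blaschke_factor m l))"
proof -
  have nonzero: "blaschke_factor m l \<noteq> 0" if "m \<in> A" for m
    using assms that by (intro blaschke_factor_nonzero) auto
  have "((\<lambda>F. \<Sum>m\<in>F. Ln (blaschke_factor m l)) \<longlongrightarrow> (\<Sum>\<^sub>\<infinity>m\<in>A. Ln (blaschke_factor m l)))
      (finite_subsets_at_top A)"
    using summable_on_Ln_blaschke_factor[OF assms(1-3)] by (simp add: has_sum_def[symmetric])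
  then have "((\<lambda>F. exp (\<Sum>m\<in>F. Ln (blaschke_factor m l))) \<longlongrightarrow> exp (\<Sum>\<^sub>\<infinity>m\<in>A. Ln (blaschke_factor m l)))
      (finite_subsets_at_top A)"
    by (rule tendsto_exp)
  moreover have "\<forall>\<^sub>F F in finite_subsets_at_top A.
      exp (\<Sum>m\<in>F. Ln (blaschke_factor m l)) = (\<Prod>m\<in>F. blaschke_factor m l)"
    by (rule eventually_finite_subsets_at_top_weakI) (auto simp: exp_sum nonzero intro!: prod.cong)
  ultimately have "((\<lambda>F. \<Prod>m\<in>F. blaschke_factor m l) \<longlongrightarrow> exp (\<Sum>\<^sub>\<infinity>m\<in>A. Ln (blaschke_factor m l)))
      (finite_subsets_at_top A)"
    by (rule Lim_transform_eventually)
  then show ?thesis unfolding blaschke_prod_def by (intro tendsto_Lim) auto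
qed

lemma has_sum_neg_ln_norm_blaschke_factor:
  assumes "A \<subseteq> ball 0 1" "(\<lambda>m. 1 - (cmod m)\<^sup>2) summable_on A" "cmod l < 1" "l \<notin> A"
  shows "((\<lambda>m. - ln (cmod (blaschke_factor m l))) has_sum ln (1 / cmod (blaschke_prod A l))) A"
proof -
  define S where "S = (\<Sum>\<^sub>\<infinity>m\<in>A. Ln (blaschke_factor m l))"
  have "((\<lambda>m. Re (Ln (blaschke_factor m l))) has_sum Re S) A"
    using summable_on_Ln_blaschke_factor[OF assms(1-3)] by (intro has_sum_Re) (simp add: S_def)
  moreover have "((\<lambda>m. ln (cmod (blaschke_factor m l))) has_sum Re S) A
      \<longleftrightarrow> ((\<lambda>m. Re (Ln (blaschke_factor m l))) has_sum Re S) A"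
    using assms by (intro has_sum_cong Re_Ln[symmetric] blaschke_factor_nonzero) auto
  ultimately have "((\<lambda>m. ln (cmod (blaschke_factor m l))) has_sum Re S) A"
    by blast
  moreover have "ln (1 / cmod (blaschke_prod A l)) = - Re S"
    using blaschke_prod_eq_exp_infsum[OF assms] by (simp add: S_def ln_div)
  ultimately show ?thesis by (simp add: has_sum_uminus)
qed

lemma neg_ln_norm_blaschke_factor_bounds:
  assumes l: "cmod l < 1" and m: "cmod m < 1" and \<delta>: "0 < \<delta>" "\<delta> \<le> cmod (blaschke_factor l m)"
  shows "blaschke_weight l m / 2 \<le> - ln (cmod (blaschke_factor m l))"
    and "- ln (cmod (blaschke_factor m l)) \<le> blaschke_weight l m / (2 * \<delta>\<^sup>2)"
proof -
  define x where "x = cmod (blaschke_factor m l)"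
  have x2: "x\<^sup>2 = 1 - blaschke_weight l m" using norm_blaschke_factor_sq[OF l m] by (simp add: x_def)
  have "\<delta> \<le> x" using \<delta> norm_blaschke_factor_commute[of m l] by (simp add: x_def)
  then have x: "0 < x" using \<delta> by linarith
  have lnx2: "ln (x\<^sup>2) = 2 * ln x" using x by (simp add: ln_realpow)
  have "ln (x\<^sup>2) \<le> x\<^sup>2 - 1" using x by (intro ln_le_minus_one) simp
  then show "blaschke_weight l m / 2 \<le> - ln (cmod (blaschke_factor m l))"
    using lnx2 x2 by (simp add: x_def[symmetric])
  have "ln (1 / x\<^sup>2) \<le> 1 / x\<^sup>2 - 1" using x by (intro ln_le_minus_one) simp
  moreover have "1 / x\<^sup>2 - 1 = blaschke_weight l m / x\<^sup>2" using x2 x by (simp add: field_simps)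
  moreover have "blaschke_weight l m / x\<^sup>2 \<le> blaschke_weight l m / \<delta>\<^sup>2"
    using blaschke_weight_nonneg[OF l m] \<open>\<delta> \<le> x\<close> \<delta> by (intro divide_left_mono power_mono) auto
  ultimately show "- ln (cmod (blaschke_factor m l)) \<le> blaschke_weight l m / (2 * \<delta>\<^sup>2)"
    using lnx2 x by (simp add: x_def[symmetric] ln_div)
qed

section \<open>Alternating sums\<close>

fun alt_sum :: "real list \<Rightarrow> real" where
  "alt_sum [] = 0"
| "alt_sum (x # xs) = x - alt_sum xs"

lemma alt_sum_append: "alt_sum (xs @ ys) = alt_sum xs + (-1) ^ length xs * alt_sum ys"
  by (induction xs) auto

lemma abs_alt_sum_append_le: "\<bar>alt_sum (xs @ ys)\<bar> \<le> \<bar>alt_sum xs\<bar> + \<bar>alt_sum ys\<bar>"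
  unfolding alt_sum_append by (auto simp: abs_mult intro: order_trans[OF abs_triangle_ineq])

lemma abs_alt_sum_rev: "\<bar>alt_sum (rev xs)\<bar> = \<bar>alt_sum xs\<bar>"
proof -
  have "alt_sum (rev xs) = (-1) ^ Suc (length xs) * alt_sum xs"
    by (induction xs) (auto simp: alt_sum_append algebra_simps)
  then show ?thesis by (simp add: abs_mult)
qed

lemma alt_sum_antimono_bounds:
  assumes "sorted_wrt (\<ge>) (x # xs)" "\<forall>y\<in>set (x # xs). 0 \<le> y"
  shows "0 \<le> alt_sum (x # xs) \<and> alt_sum (x # xs) \<le> x"
  using assms by (induction xs arbitrary: x) (force simp: le_diff_eq)+

lemma abs_alt_sum_monotone_le:
  assumes "sorted xs \<or> sorted_wrt (\<ge>) xs" "\<forall>x\<in>set xs. 0 \<le> x \<and> x \<le> M" "0 \<le> M"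
  shows "\<bar>alt_sum xs\<bar> \<le> M"
proof -
  have antitone: "\<bar>alt_sum ys\<bar> \<le> M" if "sorted_wrt (\<ge>) ys" "\<forall>x\<in>set ys. 0 \<le> x \<and> x \<le> M" for ys
  proof (cases ys)
    case (Cons y ys')
    then show ?thesis using alt_sum_antimono_bounds[of y ys'] that by fastforce
  qed (use assms(3) in simp)
  show ?thesis
  proof (cases "sorted xs")
    case True
    then have "sorted_wrt (\<ge>) (rev xs)" by (simp add: sorted_wrt_rev)
    then show ?thesis using antitone[of "rev xs"] assms(2) abs_alt_sum_rev by simp
  qed (use assms antitone in auto)
qed

lemma abs_alt_sum_map_monotone_le:
  fixes xs :: "'a::linorder list"
  assumes "sorted xs"
    and "(\<forall>x\<in>set xs. \<forall>y\<in>set xs. x \<le> y \<longrightarrow> g x \<le> g y) \<or> (\<forall>x\<in>set xs. \<forall>y\<in>set xs. x \<le> y \<longrightarrow> g y \<le> g x)"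
    and "\<forall>x\<in>set xs. 0 \<le> g x \<and> g x \<le> M" "0 \<le> M"
  shows "\<bar>alt_sum (map g xs)\<bar> \<le> M"
proof (rule abs_alt_sum_monotone_le)
  show "sorted (map g xs) \<or> sorted_wrt (\<ge>) (map g xs)"
    using assms(2) unfolding sorted_wrt_map
    by (elim disjE) (auto intro: sorted_wrt_mono_rel[OF _ assms(1)])
qed (use assms(3,4) in auto)

lemma sorted_filter_le_append_filter_gr:
  fixes xs :: "'a::linorder list"
  assumes "sorted xs"
  shows "filter (\<lambda>x. x \<le> t) xs @ filter (\<lambda>x. t < x) xs = xs"
  using assms
proof (induction xs)
  case (Cons a xs)
  show ?case
  proof (cases "a \<le> t")
    case False
    with Cons.prems have "\<forall>x\<in>set xs. t < x" by (auto intro: less_le_trans)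
    with False show ?thesis by (auto simp: filter_empty_conv filter_id_conv)
  qed (use Cons in auto)
qed simp

lemma abs_alt_sum_map_split_le:
  fixes xs :: "'a::linorder list"
  assumes "sorted xs"
  shows "\<bar>alt_sum (map g xs)\<bar>
    \<le> \<bar>alt_sum (map g (filter (\<lambda>x. x \<le> t) xs))\<bar> + \<bar>alt_sum (map g (filter (\<lambda>x. t < x) xs))\<bar>"
proof -
  have "map g xs = map g (filter (\<lambda>x. x \<le> t) xs) @ map g (filter (\<lambda>x. t < x) xs)"
    by (simp only: map_append[symmetric] sorted_filter_le_append_filter_gr[OF assms])
  then show ?thesis by (metis abs_alt_sum_append_le)
qed

lemma sum_parity_ge_alt_sum:
  assumes "P = even \<or> P = odd"
  shows "(\<Sum>i | i < length xs \<and> P i. xs ! i) \<ge> (sum_list xs - \<bar>alt_sum xs\<bar>) / 2"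
proof -
  have "sum_list xs = (\<Sum>i | i < length xs \<and> even i. xs ! i) + (\<Sum>i | i < length xs \<and> odd i. xs ! i)
      \<and> alt_sum xs = (\<Sum>i | i < length xs \<and> even i. xs ! i) - (\<Sum>i | i < length xs \<and> odd i. xs ! i)"
  proof (induction xs)
    case (Cons x xs)
    have "{i. i < length (x # xs) \<and> Q i} = (if Q 0 then {0} else {}) \<union> Suc ` {i. i < length xs \<and> Q (Suc i)}"
      for Q :: "nat \<Rightarrow> bool"
      by (auto simp: image_iff less_Suc_eq_0_disj)
    then have "(\<Sum>i | i < length (x # xs) \<and> Q i. (x # xs) ! i)
        = (if Q 0 then x else 0) + (\<Sum>i | i < length xs \<and> Q (Suc i). xs ! i)" for Q :: "nat \<Rightarrow> bool"
      by (simp add: sum.reindex)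
    then show ?case using Cons by simp
  qed simp
  then show ?thesis using assms by auto
qed

section \<open>Weights on circles and dyadic annuli\<close>

definition circle_weight :: "real \<Rightarrow> real \<Rightarrow> real \<Rightarrow> real" where
  "circle_weight a r c = (1 - a\<^sup>2) * (1 - r\<^sup>2) / (1 + (a * r)\<^sup>2 - 2 * (a * r) * c)"

lemma norm_one_minus_rcis_sq:
  "(cmod (1 - rcis \<rho> \<phi>))\<^sup>2 = 1 + \<rho>\<^sup>2 - 2 * \<rho> * cos \<phi>"
proof -
  have "(cmod (1 - rcis \<rho> \<phi>))\<^sup>2 = (1 - \<rho> * cos \<phi>)\<^sup>2 + (\<rho> * sin \<phi>)\<^sup>2"
    unfolding cmod_power2 by simp
  also have "\<dots> = 1 + \<rho>\<^sup>2 * ((sin \<phi>)\<^sup>2 + (cos \<phi>)\<^sup>2) - 2 * \<rho> * cos \<phi>"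
    by (simp only: power2_eq_square) algebra
  finally show ?thesis by simp
qed

lemma blaschke_weight_rcis:
  assumes "cmod l < 1" "0 \<le> r"
  shows "blaschke_weight l (rcis r \<theta>) = circle_weight (cmod l) r (cos (\<theta> - Arg l))"
proof -
  have "cnj l * rcis r \<theta> = rcis (cmod l * r) (\<theta> - Arg l)"
    by (simp add: rcis_cnj rcis_mult)
  then have "(cmod (1 - cnj l * rcis r \<theta>))\<^sup>2 = 1 + (cmod l * r)\<^sup>2 - 2 * (cmod l * r) * cos (\<theta> - Arg l)"
    by (simp only: norm_one_minus_rcis_sq)
  then show ?thesis
    using assms by (simp add: blaschke_weight_def circle_weight_def)
qed

lemma circle_weight_denom_ge:
  fixes a r c :: real
  assumes "0 \<le> a" "a < 1" "0 \<le> r" "r < 1" "c \<le> 1"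
  shows "(1 - a * r)\<^sup>2 \<le> 1 + (a * r)\<^sup>2 - 2 * (a * r) * c" "0 < (1 - a * r)\<^sup>2"
proof -
  have "a * r \<le> a" using assms by (intro mult_right_le_one_le) auto
  then have "a * r < 1" using assms by linarith
  then show "0 < (1 - a * r)\<^sup>2" by simp
  have "2 * (a * r) * c \<le> 2 * (a * r)" using assms by (simp add: mult_left_le)
  moreover have "(1 - a * r)\<^sup>2 = 1 + (a * r)\<^sup>2 - 2 * (a * r)"
    by (simp add: power2_eq_square algebra_simps)
  ultimately show "(1 - a * r)\<^sup>2 \<le> 1 + (a * r)\<^sup>2 - 2 * (a * r) * c" by linarith
qed

lemma circle_weight_nonneg:
  fixes a r c :: real
  assumes "0 \<le> a" "a < 1" "0 \<le> r" "r < 1" "c \<le> 1"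
  shows "0 \<le> circle_weight a r c"
proof -
  have "0 \<le> 1 + (a * r)\<^sup>2 - 2 * (a * r) * c" using circle_weight_denom_ge[OF assms] by linarith
  moreover have "0 \<le> (1 - a\<^sup>2) * (1 - r\<^sup>2)" using assms by (auto simp: power_le_one)
  ultimately show ?thesis unfolding circle_weight_def by simp
qed

lemma circle_weight_mono:
  fixes a r c c' :: real
  assumes "0 \<le> a" "a < 1" "0 \<le> r" "r < 1" "c \<le> c'" "c' \<le> 1"
  shows "circle_weight a r c \<le> circle_weight a r c'"
proof -
  have "0 < 1 + (a * r)\<^sup>2 - 2 * (a * r) * c'"
    using circle_weight_denom_ge[OF assms(1-4,6)] by linarith
  moreover have "2 * (a * r) * c \<le> 2 * (a * r) * c'" using assms by (intro mult_left_mono) auto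
  moreover have "0 \<le> (1 - a\<^sup>2) * (1 - r\<^sup>2)" using assms by (auto simp: power_le_one)
  ultimately show ?thesis unfolding circle_weight_def by (intro divide_left_mono) auto
qed

lemma cos_diff_mono_pieces:
  fixes x y \<alpha> :: real
  assumes "-pi \<le> x" "y \<le> pi" "-pi < \<alpha>" "\<alpha> \<le> pi" "x \<le> y"
  shows "y \<le> \<alpha> - pi \<Longrightarrow> cos (y - \<alpha>) \<le> cos (x - \<alpha>)"
    and "\<alpha> - pi < x \<Longrightarrow> y \<le> \<alpha> \<Longrightarrow> cos (x - \<alpha>) \<le> cos (y - \<alpha>)"
    and "\<alpha> < x \<Longrightarrow> y \<le> \<alpha> + pi \<Longrightarrow> cos (y - \<alpha>) \<le> cos (x - \<alpha>)"
    and "\<alpha> + pi < x \<Longrightarrow> cos (x - \<alpha>) \<le> cos (y - \<alpha>)"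
proof -
  assume "y \<le> \<alpha> - pi"
  then have "cos (y - \<alpha> + 2*pi) \<le> cos (x - \<alpha> + 2*pi)"
    using assms by (intro cos_monotone_0_pi_le) auto
  then show "cos (y - \<alpha>) \<le> cos (x - \<alpha>)" by (simp add: cos_periodic)
next
  assume "\<alpha> - pi < x" "y \<le> \<alpha>"
  then have "cos (- (x - \<alpha>)) \<le> cos (- (y - \<alpha>))"
    using assms by (intro cos_monotone_0_pi_le) auto
  then show "cos (x - \<alpha>) \<le> cos (y - \<alpha>)" by (simp only: cos_minus)
next
  assume "\<alpha> < x" "y \<le> \<alpha> + pi"
  then show "cos (y - \<alpha>) \<le> cos (x - \<alpha>)"
    using assms by (intro cos_monotone_0_pi_le) auto
next
  assume "\<alpha> + pi < x"
  then have "cos (2*pi - (x - \<alpha>)) \<le> cos (2*pi - (y - \<alpha>))"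
    using assms by (intro cos_monotone_0_pi_le) auto
  then show "cos (x - \<alpha>) \<le> cos (y - \<alpha>)" by (simp add: cos_diff)
qed

definition annulus_index :: "complex \<Rightarrow> nat" where
  "annulus_index z = (LEAST j. (1/2::real) ^ Suc j < 1 - cmod z)"

definition annulus_radius :: "nat \<Rightarrow> real" where
  "annulus_radius j = 1 - (1/2) ^ j"

lemma annulus_index_bounds:
  assumes "cmod z < 1"
  shows "(1/2::real) ^ Suc (annulus_index z) < 1 - cmod z" "1 - cmod z \<le> (1/2::real) ^ annulus_index z"
proof -
  obtain n where "(1/2::real) ^ n < 1 - cmod z"
    using real_arch_pow_inv[of "1 - cmod z" "1/2"] assms by auto
  then have "(1/2::real) ^ Suc n < 1 - cmod z"
    by (rule le_less_trans[rotated]) (simp add: power_decreasing)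
  then show "(1/2::real) ^ Suc (annulus_index z) < 1 - cmod z"
    unfolding annulus_index_def by (rule LeastI)
  show "1 - cmod z \<le> (1/2::real) ^ annulus_index z"
  proof (cases "annulus_index z")
    case (Suc k)
    then have "\<not> (1/2::real) ^ Suc k < 1 - cmod z"
      unfolding annulus_index_def by (metis lessI not_less_Least)
    then show ?thesis using Suc by simp
  qed simp
qed

lemma annulus_radius_bounds: "0 \<le> annulus_radius j" "annulus_radius j < 1"
  unfolding annulus_radius_def by (auto simp: power_le_one)

lemma norm_one_minus_cnj_mult_diff_le:
  assumes "cmod l \<le> 1"
  shows "\<bar>cmod (1 - cnj l * m) - cmod (1 - cnj l * m')\<bar> \<le> cmod (m - m')"
proof -
  have "\<bar>cmod (1 - cnj l * m) - cmod (1 - cnj l * m')\<bar> \<le> cmod (cnj l * (m' - m))"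
    using norm_triangle_ineq3[of "1 - cnj l * m" "1 - cnj l * m'"] by (simp add: algebra_simps)
  also have "\<dots> \<le> cmod (m - m')"
    using assms by (simp add: norm_mult norm_minus_commute mult_left_le_one_le)
  finally show ?thesis .
qed

lemma mult_divide_le_scaled:
  fixes A x y b d k :: real
  assumes "0 < b" "0 < d" "0 \<le> A" "x * d \<le> k * y * b"
  shows "A * x / b \<le> k * (A * y / d)"
proof -
  have "A * x * d \<le> A * (k * y * b)" using mult_left_mono[OF assms(4,3)] by (simp add: mult.assoc)
  then show ?thesis using assms by (simp add: field_simps)
qed

lemma norm_radial_projection_annulus:
  assumes "cmod m < 1"
  defines "m' \<equiv> rcis (annulus_radius (annulus_index m)) (Arg m)"
  shows "cmod m' = 1 - (1/2) ^ annulus_index m" "cmod (m - m') \<le> (1/2) ^ annulus_index m / 2"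
proof -
  define h :: real where "h = (1/2) ^ annulus_index m"
  have h: "h/2 < 1 - cmod m" "1 - cmod m \<le> h"
    using annulus_index_bounds[OF assms(1)] by (auto simp: h_def)
  show "cmod m' = 1 - (1/2) ^ annulus_index m"
    using annulus_radius_bounds by (simp add: m'_def annulus_radius_def)
  have "m = rcis (cmod m) (Arg m)" by (simp add: rcis_cmod_Arg)
  then have "m' - m = rcis ((1 - h) - cmod m) (Arg m)"
    by (simp add: m'_def annulus_radius_def h_def rcis_def algebra_simps)
  then have "cmod (m' - m) = \<bar>1 - h - cmod m\<bar>" by simp
  then show "cmod (m - m') \<le> (1/2) ^ annulus_index m / 2" using h by (simp add: norm_minus_commute h_def)
qed

text \<open>Moving a point of a dyadic annulus radially onto its inner boundary circle changes
  \<open>1 - |m|\<^sup>2\<close> and \<open>|1 - cnj l * m|\<close> only by bounded factors.\<close>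

lemma blaschke_weight_radial_comparison:
  assumes l: "cmod l < 1" and m: "cmod m < 1"
  defines "m' \<equiv> rcis (annulus_radius (annulus_index m)) (Arg m)"
  shows "blaschke_weight l m \<le> 16 * blaschke_weight l m'"
    and "blaschke_weight l m' \<le> 16 * blaschke_weight l m"
proof -
  define h :: real where "h = (1/2) ^ annulus_index m"
  have h: "h/2 < 1 - cmod m" "1 - cmod m \<le> h" "0 < h" "h \<le> 1"
    using annulus_index_bounds[OF m] by (auto simp: h_def power_le_one)
  have m': "cmod m' = 1 - h" "cmod (m - m') \<le> h/2"
    using norm_radial_projection_annulus[OF m] by (simp_all add: m'_def h_def)
  define D D' where "D = cmod (1 - cnj l * m)" and "D' = cmod (1 - cnj l * m')"
  have "\<bar>D - D'\<bar> \<le> h/2"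
    using norm_one_minus_cnj_mult_diff_le[of l m m'] l m' by (simp add: D_def D'_def)
  moreover have "1 - cmod m \<le> D" "h \<le> D'"
    using cmod_one_minus_cnj_mult_ge(1)[of m l] cmod_one_minus_cnj_mult_ge(1)[of m' l] l m m' h
    by (auto simp: D_def D'_def)
  ultimately have D: "0 < D" "D' \<le> 2 * D" "D \<le> 3/2 * D'" using h by linarith+
  have "D'\<^sup>2 \<le> (2 * D)\<^sup>2" "D\<^sup>2 \<le> (3/2 * D')\<^sup>2"
    using D h \<open>h \<le> D'\<close> by (intro power_mono; linarith)+
  then have D2: "D'\<^sup>2 \<le> 4 * D\<^sup>2" "D\<^sup>2 \<le> 9/4 * D'\<^sup>2" by (simp_all add: power2_eq_square)
  have Nm: "1 - (cmod m)\<^sup>2 = (1 - cmod m) * (1 + cmod m)" and Nm': "1 - (cmod m')\<^sup>2 = h * (2 - h)"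
    unfolding m' by (simp_all add: power2_eq_square algebra_simps)
  have "(1 - cmod m) * (1 + cmod m) \<le> h * 2" using h m by (intro mult_mono) auto
  moreover have "h \<le> h * (2 - h)" "h * (2 - h) \<le> h * 2" using h by (simp_all add: mult_le_cancel_left1)
  moreover have "1 - cmod m \<le> (1 - cmod m) * (1 + cmod m)" using m by (simp add: mult_le_cancel_left1)
  ultimately have N: "1 - (cmod m)\<^sup>2 \<le> 2 * (1 - (cmod m')\<^sup>2)" "1 - (cmod m')\<^sup>2 \<le> 4 * (1 - (cmod m)\<^sup>2)"
    "0 \<le> 1 - (cmod m)\<^sup>2" "0 \<le> 1 - (cmod m')\<^sup>2"
    unfolding Nm Nm' using h by linarith+
  have A: "0 \<le> 1 - (cmod l)\<^sup>2" using l by (simp add: abs_square_le_1 less_imp_le)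
  have W: "blaschke_weight l m = (1 - (cmod l)\<^sup>2) * (1 - (cmod m)\<^sup>2) / D\<^sup>2"
    "blaschke_weight l m' = (1 - (cmod l)\<^sup>2) * (1 - (cmod m')\<^sup>2) / D'\<^sup>2"
    by (simp_all add: blaschke_weight_def D_def D'_def mult.assoc)
  have "(1 - (cmod m)\<^sup>2) * D'\<^sup>2 \<le> (2 * (1 - (cmod m')\<^sup>2)) * (4 * D\<^sup>2)"
    using N D2 by (intro mult_mono) auto
  also have "\<dots> \<le> 16 * (1 - (cmod m')\<^sup>2) * D\<^sup>2"
    using mult_nonneg_nonneg[OF N(4) zero_le_power2[of D]] by linarith
  finally show "blaschke_weight l m \<le> 16 * blaschke_weight l m'"
    unfolding W using D \<open>h \<le> D'\<close> h A by (intro mult_divide_le_scaled) auto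
  have "(1 - (cmod m')\<^sup>2) * D\<^sup>2 \<le> (4 * (1 - (cmod m)\<^sup>2)) * (9/4 * D'\<^sup>2)"
    using N D2 by (intro mult_mono) auto
  also have "\<dots> \<le> 16 * (1 - (cmod m)\<^sup>2) * D'\<^sup>2"
    using mult_nonneg_nonneg[OF N(3) zero_le_power2[of D']] by linarith
  finally show "blaschke_weight l m' \<le> 16 * blaschke_weight l m"
    unfolding W using D \<open>h \<le> D'\<close> h A by (intro mult_divide_le_scaled) auto
qed

lemma circle_weight_max_le_telescoping:
  fixes a y :: real
  assumes "0 \<le> a" "a < 1" "0 < y" "y \<le> 1"
  shows "circle_weight a (1 - y) 1 \<le> 32 * ((1 - a) / ((1 - a) + y/2) - (1 - a) / ((1 - a) + y))"
proof -
  define x where "x = 1 - a"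
  have x: "0 < x" "x \<le> 1" using assms by (auto simp: x_def)
  have "1 - a\<^sup>2 = x * (2 - x)" "1 - (1 - y)\<^sup>2 = y * (2 - y)"
    "1 + (a * (1 - y))\<^sup>2 - 2 * (a * (1 - y)) * 1 = (x + y - x * y)\<^sup>2"
    by (simp_all add: x_def power2_eq_square algebra_simps)
  then have "circle_weight a (1 - y) 1 = (x * (2 - x)) * (y * (2 - y)) / (x + y - x * y)\<^sup>2"
    by (simp only: circle_weight_def)
  also have "\<dots> \<le> (2 * x) * (2 * y) / ((x + y) / 2)\<^sup>2"
  proof (rule frac_le)
    have "x * (2 - x) \<le> x * 2" "y * (2 - y) \<le> y * 2" using x assms by (intro mult_left_mono; simp)+
    then have "(x * (2 - x)) * (y * (2 - y)) \<le> (x * 2) * (y * 2)"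
      using x assms by (rule_tac mult_mono) auto
    then show "(x * (2 - x)) * (y * (2 - y)) \<le> (2 * x) * (2 * y)" by linarith
    have "x * y \<le> x" "x * y \<le> y" using x assms by (simp_all add: mult_left_le mult_le_cancel_right1)
    then have "(x + y) / 2 \<le> x + y - x * y" by simp
    then show "((x + y) / 2)\<^sup>2 \<le> (x + y - x * y)\<^sup>2" using x assms by (intro power_mono) auto
  qed (use x assms in auto)
  also have "\<dots> = 16 * (x * y) / (x + y)\<^sup>2" by (simp add: power2_eq_square field_simps)
  also have "\<dots> \<le> 32 * (x * y) / ((2 * x + y) * (x + y))"
  proof -
    have "(2 * x + y) * (x + y) \<le> 2 * (x + y)\<^sup>2"
      using x assms by (simp add: power2_eq_square algebra_simps)
    then have "32 * (x * y) / (2 * (x + y)\<^sup>2) \<le> 32 * (x * y) / ((2 * x + y) * (x + y))"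
      using x assms by (intro divide_left_mono) auto
    then show ?thesis by simp
  qed
  also have "\<dots> = 32 * (x / (x + y/2) - x / (x + y))"
    using x assms by (simp add: field_simps)
  finally show ?thesis by (simp add: x_def)
qed

lemma sum_circle_weight_max_le:
  assumes "0 \<le> a" "a < 1"
  shows "(\<Sum>j<n. circle_weight a (annulus_radius j) 1) \<le> 32"
proof -
  define \<psi> where "\<psi> j = (1 - a) / ((1 - a) + (1/2::real) ^ j)" for j
  have "(\<Sum>j<n. circle_weight a (annulus_radius j) 1) \<le> (\<Sum>j<n. 32 * (\<psi> (Suc j) - \<psi> j))"
  proof (rule sum_mono)
    fix j
    have "circle_weight a (1 - (1/2) ^ j) 1
        \<le> 32 * ((1 - a) / ((1 - a) + (1/2::real) ^ j / 2) - (1 - a) / ((1 - a) + (1/2) ^ j))"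
      using assms by (intro circle_weight_max_le_telescoping) (auto simp: power_le_one)
    then show "circle_weight a (annulus_radius j) 1 \<le> 32 * (\<psi> (Suc j) - \<psi> j)"
      by (simp add: \<psi>_def annulus_radius_def)
  qed
  also have "\<dots> = 32 * (\<psi> n - \<psi> 0)"
    by (simp only: sum_distrib_left[symmetric] sum_lessThan_telescope)
  also have "\<dots> \<le> 32"
  proof -
    have "\<psi> n \<le> 1" using assms by (simp add: \<psi>_def divide_le_eq)
    moreover have "0 \<le> \<psi> 0" using assms by (simp add: \<psi>_def)
    ultimately show ?thesis by simp
  qed
  finally show ?thesis .
qed

text \<open>As a function of the argument, the weight on a circle has at most four monotone pieces,
  cut at \<open>\<alpha> - pi\<close>, \<open>\<alpha>\<close> and \<open>\<alpha> + pi\<close>.\<close>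

lemma abs_alt_sum_circle_weight_le:
  fixes \<theta>s :: "real list" and a r \<alpha> :: real
  assumes ar: "0 \<le> a" "a < 1" "0 \<le> r" "r < 1" and \<theta>s: "sorted \<theta>s" "\<forall>\<theta>\<in>set \<theta>s. -pi < \<theta> \<and> \<theta> \<le> pi"
    and \<alpha>: "-pi < \<alpha>" "\<alpha> \<le> pi"
  shows "\<bar>alt_sum (map (\<lambda>\<theta>. circle_weight a r (cos (\<theta> - \<alpha>))) \<theta>s)\<bar> \<le> 4 * circle_weight a r 1"
proof -
  define g where "g \<theta> = circle_weight a r (cos (\<theta> - \<alpha>))" for \<theta>
  define M where "M = circle_weight a r 1"
  have g_mono: "g x \<le> g y" if "cos (x - \<alpha>) \<le> cos (y - \<alpha>)" for x y
    unfolding g_def using that ar by (intro circle_weight_mono) auto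
  have g_bounds: "0 \<le> g \<theta> \<and> g \<theta> \<le> M" for \<theta>
    unfolding g_def M_def using ar by (auto intro: circle_weight_nonneg circle_weight_mono)
  then have "0 \<le> M" by (meson order_trans)
  have piece: "\<bar>alt_sum (map g xs)\<bar> \<le> M"
    if "sorted xs" "\<forall>x\<in>set xs. -pi < x \<and> x \<le> pi"
      and "(\<forall>x\<in>set xs. \<forall>y\<in>set xs. x \<le> y \<longrightarrow> cos (x - \<alpha>) \<le> cos (y - \<alpha>))
        \<or> (\<forall>x\<in>set xs. \<forall>y\<in>set xs. x \<le> y \<longrightarrow> cos (y - \<alpha>) \<le> cos (x - \<alpha>))" for xs
    using that(1,3) g_bounds \<open>0 \<le> M\<close>
    by (intro abs_alt_sum_map_monotone_le) (auto intro: g_mono)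
  define R1 where "R1 = filter (\<lambda>x. \<alpha> - pi < x) \<theta>s"
  define R2 where "R2 = filter (\<lambda>x. \<alpha> < x) R1"
  have sorted: "sorted R1" "sorted R2"
    unfolding R1_def R2_def using \<theta>s(1) by (auto intro: sorted_wrt_filter)
  have range: "\<forall>x\<in>set R1. -pi < x \<and> x \<le> pi" "\<forall>x\<in>set R2. -pi < x \<and> x \<le> pi"
    using \<theta>s(2) by (auto simp: R1_def R2_def)
  have "\<bar>alt_sum (map g \<theta>s)\<bar> \<le> \<bar>alt_sum (map g (filter (\<lambda>x. x \<le> \<alpha> - pi) \<theta>s))\<bar> + \<bar>alt_sum (map g R1)\<bar>"
    unfolding R1_def by (rule abs_alt_sum_map_split_le[OF \<theta>s(1)])
  also have "\<bar>alt_sum (map g (filter (\<lambda>x. x \<le> \<alpha> - pi) \<theta>s))\<bar> \<le> M"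
    using \<theta>s \<alpha> by (intro piece sorted_wrt_filter) (auto intro!: disjI2 cos_diff_mono_pieces(1))
  also have "\<bar>alt_sum (map g R1)\<bar> \<le> \<bar>alt_sum (map g (filter (\<lambda>x. x \<le> \<alpha>) R1))\<bar> + \<bar>alt_sum (map g R2)\<bar>"
    unfolding R2_def by (rule abs_alt_sum_map_split_le[OF sorted(1)])
  also have "\<bar>alt_sum (map g (filter (\<lambda>x. x \<le> \<alpha>) R1))\<bar> \<le> M"
    using sorted range \<alpha>
    by (intro piece sorted_wrt_filter) (auto simp: R1_def intro!: disjI1 cos_diff_mono_pieces(2))
  also have "\<bar>alt_sum (map g R2)\<bar> \<le> \<bar>alt_sum (map g (filter (\<lambda>x. x \<le> \<alpha> + pi) R2))\<bar>
      + \<bar>alt_sum (map g (filter (\<lambda>x. \<alpha> + pi < x) R2))\<bar>"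
    by (rule abs_alt_sum_map_split_le[OF sorted(2)])
  also have "\<bar>alt_sum (map g (filter (\<lambda>x. x \<le> \<alpha> + pi) R2))\<bar> \<le> M"
    using sorted range \<alpha>
    by (intro piece sorted_wrt_filter) (auto simp: R2_def intro!: disjI2 cos_diff_mono_pieces(3))
  also have "\<bar>alt_sum (map g (filter (\<lambda>x. \<alpha> + pi < x) R2))\<bar> \<le> M"
    using sorted range \<alpha>
    by (intro piece sorted_wrt_filter) (auto simp: R2_def intro!: disjI1 cos_diff_mono_pieces(4))
  finally show ?thesis by (simp add: g_def[abs_def] M_def)
qed

section \<open>Splitting each annulus by parity of the argument rank\<close>

definition arg_sorted_list :: "complex set \<Rightarrow> complex list" where
  "arg_sorted_list S = sort_key Arg (SOME xs. set xs = S \<and> distinct xs)"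

definition arg_rank :: "complex set \<Rightarrow> complex \<Rightarrow> nat" where
  "arg_rank S \<mu> = (LEAST i. arg_sorted_list S ! i = \<mu>)"

lemma arg_sorted_list:
  assumes "finite S"
  shows "set (arg_sorted_list S) = S" "distinct (arg_sorted_list S)"
    "sorted (map Arg (arg_sorted_list S))"
proof -
  have "set (SOME xs. set xs = S \<and> distinct xs) = S \<and> distinct (SOME xs. set xs = S \<and> distinct xs)"
    using finite_distinct_list[OF assms] by (rule someI_ex)
  then show "set (arg_sorted_list S) = S" "distinct (arg_sorted_list S)"
    "sorted (map Arg (arg_sorted_list S))" by (auto simp: arg_sorted_list_def)
qed

lemma arg_rank_nth:
  assumes "finite S" "i < length (arg_sorted_list S)"
  shows "arg_rank S (arg_sorted_list S ! i) = i"
  unfolding arg_rank_def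
proof (rule Least_equality)
  fix j assume "arg_sorted_list S ! j = arg_sorted_list S ! i"
  then show "i \<le> j"
    using assms arg_sorted_list(2)[OF assms(1)] nth_eq_iff_index_eq[of "arg_sorted_list S" j i]
    by (cases "j < i") auto
qed simp

lemma nth_arg_rank:
  assumes "finite S" "\<mu> \<in> S"
  shows "arg_rank S \<mu> < length (arg_sorted_list S)" "arg_sorted_list S ! arg_rank S \<mu> = \<mu>"
proof -
  obtain i where "i < length (arg_sorted_list S)" "arg_sorted_list S ! i = \<mu>"
    using assms arg_sorted_list(1)[OF assms(1)] by (metis in_set_conv_nth)
  with arg_rank_nth[OF assms(1)] show "arg_rank S \<mu> < length (arg_sorted_list S)"
    "arg_sorted_list S ! arg_rank S \<mu> = \<mu>" by auto
qed

lemma sum_arg_rank_reindex: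
  assumes "finite S"
  shows "(\<Sum>\<mu> | \<mu> \<in> S \<and> P (arg_rank S \<mu>). f \<mu>)
    = (\<Sum>i | i < length (arg_sorted_list S) \<and> P i. f (arg_sorted_list S ! i))"
  using assms nth_arg_rank[OF assms] arg_rank_nth[OF assms] arg_sorted_list(1)[OF assms]
  by (intro sum.reindex_bij_witness[of _ "nth (arg_sorted_list S)" "arg_rank S"]) auto

lemma sum_parity_blaschke_weight_annulus_ge:
  assumes l: "cmod l < 1" and S: "finite S" "\<And>\<mu>. \<mu> \<in> S \<Longrightarrow> cmod \<mu> < 1 \<and> annulus_index \<mu> = j"
    and P: "P = even \<or> P = odd"
  shows "(\<Sum>\<mu> | \<mu> \<in> S \<and> P (arg_rank S \<mu>). blaschke_weight l \<mu>)
    \<ge> (\<Sum>\<mu>\<in>S. blaschke_weight l \<mu>) / 512 - circle_weight (cmod l) (annulus_radius j) 1 / 8"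
proof -
  define ks where "ks = arg_sorted_list S"
  define n where "n = length ks"
  define M where "M = circle_weight (cmod l) (annulus_radius j) 1"
  define ys
    where "ys = map (\<lambda>\<theta>. circle_weight (cmod l) (annulus_radius j) (cos (\<theta> - Arg l))) (map Arg ks)"
  have ks: "set ks = S" "sorted (map Arg ks)" using arg_sorted_list[OF S(1)] by (auto simp: ks_def)
  have ys_length: "length ys = n" by (simp add: ys_def n_def)
  have ys: "ys ! i = blaschke_weight l (rcis (annulus_radius j) (Arg (ks ! i)))" if "i < n" for i
    using that blaschke_weight_rcis[OF l annulus_radius_bounds(1)] by (simp add: ys_def n_def)
  have comparison: "blaschke_weight l (ks ! i) \<le> 16 * ys ! i" "ys ! i \<le> 16 * blaschke_weight l (ks ! i)"
    if "i < n" for i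
    using blaschke_weight_radial_comparison[OF l, of "ks ! i"] S(2)[of "ks ! i"] ks(1) that ys[OF that]
    by (auto simp: n_def)
  have "\<bar>alt_sum ys\<bar> \<le> 4 * M"
    unfolding ys_def M_def using l ks(2) annulus_radius_bounds Arg_bounded
    by (intro abs_alt_sum_circle_weight_le) auto
  then have "(\<Sum>i | i < n \<and> P i. ys ! i) \<ge> (sum_list ys - 4 * M) / 2"
    using sum_parity_ge_alt_sum[OF P, of ys] ys_length by (simp add: n_def ys_def)
  moreover have "(\<Sum>i | i < n \<and> P i. ys ! i) \<le> 16 * (\<Sum>i | i < n \<and> P i. blaschke_weight l (ks ! i))"
    using comparison by (auto simp: sum_distrib_left intro: sum_mono)
  moreover have "(\<Sum>i<n. blaschke_weight l (ks ! i)) \<le> 16 * sum_list ys"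
    using comparison
    by (auto simp: sum_list_sum_nth ys_length atLeast0LessThan sum_distrib_left intro: sum_mono)
  ultimately have "(\<Sum>i | i < n \<and> P i. blaschke_weight l (ks ! i))
      \<ge> (\<Sum>i<n. blaschke_weight l (ks ! i)) / 512 - M / 8"
    by (simp add: field_simps)
  moreover have "(\<Sum>\<mu>\<in>S. blaschke_weight l \<mu>) = (\<Sum>i<n. blaschke_weight l (ks ! i))"
    using sum_arg_rank_reindex[OF S(1), where P = "\<lambda>_. True"] by (simp add: ks_def n_def lessThan_def)
  moreover have "(\<Sum>\<mu> | \<mu> \<in> S \<and> P (arg_rank S \<mu>). blaschke_weight l \<mu>)
      = (\<Sum>i | i < n \<and> P i. blaschke_weight l (ks ! i))"
    unfolding ks_def n_def by (rule sum_arg_rank_reindex[OF S(1)])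
  ultimately show ?thesis by (simp add: M_def)
qed

definition annulus_part :: "complex set \<Rightarrow> nat \<Rightarrow> complex set" where
  "annulus_part L j = {\<mu>\<in>L. annulus_index \<mu> = j}"

definition parity_part :: "complex set \<Rightarrow> (nat \<Rightarrow> bool) \<Rightarrow> complex set" where
  "parity_part L P = {\<mu>\<in>L. P (arg_rank (annulus_part L (annulus_index \<mu>)) \<mu>)}"

lemma finite_annulus_index_less:
  assumes "L \<subseteq> ball 0 1" "(\<lambda>m. 1 - (cmod m)\<^sup>2) summable_on L"
  shows "finite {\<mu>\<in>L. annulus_index \<mu> < n}"
proof (rule finite_subset)
  show "finite {\<mu>\<in>L. (1/2::real) ^ n \<le> 1 - (cmod \<mu>)\<^sup>2}"
    using assms by (intro finite_summable_on_ge) (auto simp: abs_square_le_1 less_imp_le)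
  show "{\<mu>\<in>L. annulus_index \<mu> < n} \<subseteq> {\<mu>\<in>L. (1/2::real) ^ n \<le> 1 - (cmod \<mu>)\<^sup>2}"
  proof safe
    fix \<mu> assume "\<mu> \<in> L" "annulus_index \<mu> < n"
    then have "cmod \<mu> < 1" using assms(1) by auto
    have "(1/2::real) ^ n \<le> (1/2) ^ Suc (annulus_index \<mu>)"
      using \<open>annulus_index \<mu> < n\<close> by (intro power_decreasing) auto
    also have "\<dots> < 1 - cmod \<mu>" using annulus_index_bounds(1)[OF \<open>cmod \<mu> < 1\<close>] .
    also have "\<dots> \<le> 1 - (cmod \<mu>)\<^sup>2" using \<open>cmod \<mu> < 1\<close> by (simp add: power2_eq_square mult_left_le)
    finally show "(1/2::real) ^ n \<le> 1 - (cmod \<mu>)\<^sup>2" by simp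
  qed
qed

lemma sum_annulus_index_less_group:
  assumes "finite {\<mu>\<in>L. annulus_index \<mu> < n}"
  shows "(\<Sum>\<mu> | \<mu> \<in> L \<and> annulus_index \<mu> < n \<and> Q \<mu>. f \<mu>)
    = (\<Sum>j<n. \<Sum>\<mu> | \<mu> \<in> annulus_part L j \<and> Q \<mu>. f \<mu>)"
proof -
  have "(\<Sum>\<mu> | \<mu> \<in> L \<and> annulus_index \<mu> < n \<and> Q \<mu>. f \<mu>)
      = (\<Sum>j<n. \<Sum>\<mu> | \<mu> \<in> {\<mu> \<in> L. annulus_index \<mu> < n \<and> Q \<mu>} \<and> annulus_index \<mu> = j. f \<mu>)"
    using assms by (intro sum.group[symmetric]) (auto elim: finite_subset[rotated])
  also have "\<dots> = (\<Sum>j<n. \<Sum>\<mu> | \<mu> \<in> annulus_part L j \<and> Q \<mu>. f \<mu>)"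
    by (intro sum.cong refl arg_cong[where f = "\<lambda>A. sum f A"]) (auto simp: annulus_part_def)
  finally show ?thesis .
qed

lemma sum_blaschke_weight_parity_part_ge:
  assumes L: "L \<subseteq> ball 0 1" "(\<lambda>m. 1 - (cmod m)\<^sup>2) summable_on L" and l: "cmod l < 1"
    and P: "P = even \<or> P = odd"
  shows "(\<Sum>\<mu> | \<mu> \<in> parity_part L P \<and> annulus_index \<mu> < n. blaschke_weight l \<mu>)
    \<ge> (\<Sum>\<mu> | \<mu> \<in> L \<and> annulus_index \<mu> < n. blaschke_weight l \<mu>) / 512 - 4"
proof -
  have fin: "finite {\<mu>\<in>L. annulus_index \<mu> < k}" for k using finite_annulus_index_less[OF L] .
  have annulus: "finite (annulus_part L j)"
    "\<And>\<mu>. \<mu> \<in> annulus_part L j \<Longrightarrow> cmod \<mu> < 1 \<and> annulus_index \<mu> = j" for j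
    using L fin[of "Suc j"] by (auto simp: annulus_part_def elim: finite_subset[rotated])
  have "(\<Sum>\<mu> | \<mu> \<in> parity_part L P \<and> annulus_index \<mu> < n. blaschke_weight l \<mu>)
      = (\<Sum>j<n. \<Sum>\<mu> | \<mu> \<in> annulus_part L j \<and> P (arg_rank (annulus_part L j) \<mu>). blaschke_weight l \<mu>)"
    using sum_annulus_index_less_group[OF fin,
        where Q = "\<lambda>\<mu>. P (arg_rank (annulus_part L (annulus_index \<mu>)) \<mu>)"]
    by (simp add: parity_part_def conj_ac annulus_part_def cong: conj_cong)
  also have "\<dots> \<ge> (\<Sum>j<n. (\<Sum>\<mu>\<in>annulus_part L j. blaschke_weight l \<mu>) / 512
      - circle_weight (cmod l) (annulus_radius j) 1 / 8)"
    using annulus by (intro sum_mono sum_parity_blaschke_weight_annulus_ge[OF l _ _ P]) auto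
  moreover have "(\<Sum>j<n. circle_weight (cmod l) (annulus_radius j) 1) \<le> 32"
    using l by (intro sum_circle_weight_max_le) auto
  moreover have "(\<Sum>\<mu> | \<mu> \<in> L \<and> annulus_index \<mu> < n. blaschke_weight l \<mu>)
      = (\<Sum>j<n. \<Sum>\<mu>\<in>annulus_part L j. blaschke_weight l \<mu>)"
    using sum_annulus_index_less_group[OF fin, where Q = "\<lambda>_. True"] by simp
  ultimately show ?thesis
    by (simp add: sum_subtractf sum_divide_distrib[symmetric])
qed

lemma infsum_ge_of_truncations:
  fixes v :: "'a \<Rightarrow> real" and k :: "'a \<Rightarrow> nat"
  assumes "v summable_on A" "v summable_on B" "B \<subseteq> A" "\<And>x. x \<in> A \<Longrightarrow> 0 \<le> v x" "0 < c"
    and "\<And>n. finite {x\<in>A. k x < n}"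
    and "\<And>n. (\<Sum>x | x \<in> B \<and> k x < n. v x) \<ge> c * (\<Sum>x | x \<in> A \<and> k x < n. v x) - \<eta>"
  shows "infsum v B \<ge> c * infsum v A - \<eta>"
proof -
  have "infsum v A \<le> (infsum v B + \<eta>) / c"
  proof (rule infsum_le_finite_sums[OF assms(1)])
    fix Z assume Z: "finite Z" "Z \<subseteq> A"
    define n where "n = Suc (Max (k ` Z))"
    have "Z \<subseteq> {x\<in>A. k x < n}" using Z by (auto simp: n_def less_Suc_eq_le)
    then have "sum v Z \<le> (\<Sum>x | x \<in> A \<and> k x < n. v x)"
      using assms(4,6) by (intro sum_mono2) auto
    also have "\<dots> \<le> ((\<Sum>x | x \<in> B \<and> k x < n. v x) + \<eta>) / c"
      using assms(5) assms(7)[of n] by (simp add: field_simps)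
    also have "(\<Sum>x | x \<in> B \<and> k x < n. v x) \<le> infsum v B"
      using assms(2-4) assms(6)[of n] by (intro finite_sum_le_infsum) (auto elim: finite_subset[rotated])
    finally show "sum v Z \<le> (infsum v B + \<eta>) / c" using assms(5) by (simp add: divide_right_mono)
  qed
  then show ?thesis using assms(5) by (simp add: field_simps)
qed

lemma sum_neg_ln_norm_parity_part_ge:
  assumes L: "L \<subseteq> ball 0 1" "(\<lambda>m. 1 - (cmod m)\<^sup>2) summable_on L"
    and \<delta>: "0 < \<delta>" "\<forall>a\<in>L. \<forall>b\<in>L. a \<noteq> b \<longrightarrow> \<delta> \<le> cmod (blaschke_factor a b)"
    and l: "l \<in> L" and P: "P = even \<or> P = odd"
  shows "(\<Sum>\<mu> | \<mu> \<in> parity_part L P - {l} \<and> annulus_index \<mu> < n. - ln (cmod (blaschke_factor \<mu> l)))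
    \<ge> \<delta>\<^sup>2 / 512 * (\<Sum>\<mu> | \<mu> \<in> L - {l} \<and> annulus_index \<mu> < n. - ln (cmod (blaschke_factor \<mu> l))) - 5/2"
proof -
  define v where "v \<mu> = - ln (cmod (blaschke_factor \<mu> l))" for \<mu>
  define W where "W = blaschke_weight l"
  define F where "F = {\<mu>\<in>L. annulus_index \<mu> < n}"
  define Fk where "Fk = {\<mu>\<in>parity_part L P. annulus_index \<mu> < n}"
  have l1: "cmod l < 1" using L(1) l by auto
  have Lm: "cmod \<mu> < 1" if "\<mu> \<in> L" for \<mu> using L(1) that by auto
  have v: "W \<mu> / 2 \<le> v \<mu>" "v \<mu> \<le> W \<mu> / (2 * \<delta>\<^sup>2)" if "\<mu> \<in> L - {l}" for \<mu>
    using neg_ln_norm_blaschke_factor_bounds[OF l1 Lm \<delta>(1)] \<delta>(2) l that by (auto simp: v_def W_def)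
  have W: "0 \<le> W \<mu>" "W \<mu> \<le> 1" if "\<mu> \<in> L" for \<mu>
    using blaschke_weight_nonneg[OF l1 Lm] blaschke_weight_le_one[OF l1 Lm] that by (auto simp: W_def)
  have fin: "finite F" "Fk \<subseteq> F"
    using finite_annulus_index_less[OF L] by (auto simp: F_def Fk_def parity_part_def)
  have "(\<Sum>\<mu>\<in>Fk - {l}. v \<mu>) \<ge> (\<Sum>\<mu>\<in>Fk - {l}. W \<mu>) / 2"
    unfolding sum_divide_distrib using fin v by (intro sum_mono) (auto simp: F_def)
  moreover have "(\<Sum>\<mu>\<in>Fk - {l}. W \<mu>) \<ge> (\<Sum>\<mu>\<in>Fk. W \<mu>) - 1"
  proof -
    have "finite Fk" using fin by (rule finite_subset[rotated])
    then show ?thesis using sum_diff1[of Fk W l] W l by auto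
  qed
  moreover have "(\<Sum>\<mu>\<in>Fk. W \<mu>) \<ge> (\<Sum>\<mu>\<in>F. W \<mu>) / 512 - 4"
    using sum_blaschke_weight_parity_part_ge[OF L l1 P] by (simp add: F_def Fk_def W_def)
  moreover have "(\<Sum>\<mu>\<in>F. W \<mu>) \<ge> (\<Sum>\<mu>\<in>F - {l}. W \<mu>)"
    using fin W by (intro sum_mono2) (auto simp: F_def)
  moreover have "(\<Sum>\<mu>\<in>F - {l}. W \<mu>) \<ge> 2 * \<delta>\<^sup>2 * (\<Sum>\<mu>\<in>F - {l}. v \<mu>)"
    unfolding sum_distrib_left using v \<delta>(1) by (intro sum_mono) (auto simp: F_def field_simps)
  ultimately show ?thesis
    by (simp add: v_def F_def Fk_def set_diff_eq conj_ac field_simps)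
qed

lemma ln_blaschke_prod_parity_part_ge:
  assumes L: "blaschke_seq L"
    and \<delta>: "0 < \<delta>" "\<forall>a\<in>L. \<forall>b\<in>L. a \<noteq> b \<longrightarrow> \<delta> \<le> cmod (blaschke_factor a b)"
    and l: "l \<in> L" and P: "P = even \<or> P = odd"
  shows "ln (1 / cmod (blaschke_prod (parity_part L P - {l}) l))
    \<ge> \<delta>\<^sup>2 / 512 * ln (1 / cmod (blaschke_prod (L - {l}) l)) - 5/2"
proof -
  define v where "v \<mu> = - ln (cmod (blaschke_factor \<mu> l))" for \<mu>
  have ball: "L \<subseteq> ball 0 1" and summable: "(\<lambda>m. 1 - (cmod m)\<^sup>2) summable_on L"
    using L by (auto simp: blaschke_seq_def)
  have l1: "cmod l < 1" using ball l by auto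
  have has_sum: "(v has_sum ln (1 / cmod (blaschke_prod A l))) A" if "A \<subseteq> L - {l}" for A
    unfolding v_def using that ball l1
    by (intro has_sum_neg_ln_norm_blaschke_factor summable_on_subset_banach[OF summable]) auto
  have v_nonneg: "0 \<le> v \<mu>" if "\<mu> \<in> L - {l}" for \<mu>
  proof -
    have "cmod \<mu> < 1" "\<delta> \<le> cmod (blaschke_factor l \<mu>)" using ball l \<delta>(2) that by auto
    then show ?thesis
      using neg_ln_norm_blaschke_factor_bounds(1)[OF l1 _ \<delta>(1)] blaschke_weight_nonneg[OF l1]
      by (fastforce simp: v_def)
  qed
  have "parity_part L P - {l} \<subseteq> L - {l}" by (auto simp: parity_part_def)
  have "infsum v (parity_part L P - {l}) \<ge> \<delta>\<^sup>2 / 512 * infsum v (L - {l}) - 5/2"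
  proof (rule infsum_ge_of_truncations[where k = annulus_index])
    show "v summable_on (L - {l})" "v summable_on (parity_part L P - {l})"
      using has_sum \<open>parity_part L P - {l} \<subseteq> L - {l}\<close> by (auto simp: summable_on_def)
    show "finite {\<mu> \<in> L - {l}. annulus_index \<mu> < n}" for n
      using finite_annulus_index_less[OF ball summable, of n] by (auto elim: finite_subset[rotated])
    show "(\<Sum>\<mu> | \<mu> \<in> parity_part L P - {l} \<and> annulus_index \<mu> < n. v \<mu>)
        \<ge> \<delta>\<^sup>2 / 512 * (\<Sum>\<mu> | \<mu> \<in> L - {l} \<and> annulus_index \<mu> < n. v \<mu>) - 5/2" for n
      unfolding v_def by (rule sum_neg_ln_norm_parity_part_ge[OF ball summable \<delta> l P])
  qed (use \<open>parity_part L P - {l} \<subseteq> L - {l}\<close> v_nonneg \<delta>(1) in auto)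
  then show ?thesis
    using infsumI[OF has_sum[OF \<open>parity_part L P - {l} \<subseteq> L - {l}\<close>]] infsumI[OF has_sum[of "L - {l}"]]
    by simp
qed

theorem corollary3p2:
  fixes L :: "complex set"
  assumes "blaschke_seq L" and "separated L"
  shows "\<exists>L1 L2 c \<eta>. L1 \<union> L2 = L \<and> L1 \<inter> L2 = {} \<and> c > 0 \<and> \<eta> > (0::real) \<and>
     (\<forall>Lk\<in>{L1, L2}. \<forall>l\<in>L.
        ln (1 / cmod (blaschke_prod (Lk - {l}) l))
          \<ge> c * ln (1 / cmod (blaschke_prod (L - {l}) l)) - \<eta>)"
proof -
  obtain \<delta> where \<delta>: "0 < \<delta>" "\<forall>a\<in>L. \<forall>b\<in>L. a \<noteq> b \<longrightarrow> \<delta> \<le> cmod (blaschke_factor a b)"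
    using assms(2) by (auto simp: separated_def)
  have "parity_part L even \<union> parity_part L odd = L" "parity_part L even \<inter> parity_part L odd = {}"
    by (auto simp: parity_part_def)
  moreover have "0 < \<delta>\<^sup>2 / 512" using \<delta>(1) by simp
  moreover have "\<forall>Lk\<in>{parity_part L even, parity_part L odd}. \<forall>l\<in>L.
      ln (1 / cmod (blaschke_prod (Lk - {l}) l))
        \<ge> \<delta>\<^sup>2 / 512 * ln (1 / cmod (blaschke_prod (L - {l}) l)) - 5/2"
    using ln_blaschke_prod_parity_part_ge[OF assms(1) \<delta>] by blast
  ultimately show ?thesis
    by (intro exI[of _ "parity_part L even"] exI[of _ "parity_part L odd"] exI[of _ "\<delta>\<^sup>2 / 512"]
        exI[of _ "5/2"]) simp
qed

end
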